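(* For every $1$-Sperner hypergraph ${\cal H}=(V,{\cal E})$ with $V\neq\emptyset$, we have $|{\cal E}|\le|V|$.
   Context: A hypergraph ${\cal H}=(V,{\cal E})$ consists of a finite vertex set $V$ and a set ${\cal E}$ of subsets of $V$. It is $1$-Sperner if every two distinct hyperedges $e,f$ satisfy $\min\{|e\setminus f|,|f\setminus e|\}=1$. *)

theory Defs
  imports Main
begin

definition hypergraph :: "'a set \<Rightarrow> 'a set set \<Rightarrow> bool" where
  "hypergraph V E \<longleftrightarrow> finite V \<and> (\<forall>e\<in>E. e \<subseteq> V)"

definition one_sperner :: "'a set set \<Rightarrow> bool" where
  "one_sperner E \<longleftrightarrow>
     (\<forall>e\<in>E. \<forall>f\<in>E. e \<noteq> f \<longrightarrow> min (card (e - f)) (card (f - e)) = 1)"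

end

theory Submission
  imports Defs
begin

text \<open>
  For a least edge e, a largest edge g0 among the others
  and a vertex z of e outside g0, every edge through z lies, apart from z, inside every edge
  avoiding z. Hence the edges through z, with z deleted, live on the core P of the edges avoiding z,
  while the edges avoiding z, with P deleted, live on the remaining vertices Q. Both families are
  again 1-Sperner, so induction bounds them by max 1 |P| and max 1 |Q|, where |P| + |Q| = |V| - 1.
  If both families are nonempty, an edge avoiding z is nonempty (the empty set would lie inside an
  edge through z), so |P| + |Q| \<ge> 1 and the two bounds add up to at most |V|.
\<close>

definition splitting_vertex :: "'a set set \<Rightarrow> 'a \<Rightarrow> bool" where
  "splitting_vertex E z \<longleftrightarrow> (\<forall>g\<in>E. \<forall>h\<in>E. z \<in> g \<longrightarrow> z \<notin> h \<longrightarrow> g - {z} \<subseteq> h)"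

lemma hypergraph_finite_edges:
  assumes "hypergraph V E"
  shows "finite E" and "\<forall>e\<in>E. finite e"
proof -
  have "finite V" "E \<subseteq> Pow V" using assms unfolding hypergraph_def by auto
  then show "finite E" and "\<forall>e\<in>E. finite e" by (auto intro: finite_subset)
qed

lemma one_sperner_subset:
  "one_sperner E \<Longrightarrow> F \<subseteq> E \<Longrightarrow> one_sperner F"
  unfolding one_sperner_def by blast

lemma one_sperner_antichain:
  assumes "one_sperner E" "a \<in> E" "b \<in> E" "a \<subseteq> b"
  shows "a = b"
proof (rule ccontr)
  assume "a \<noteq> b"
  with assms have "min (card (a - b)) (card (b - a)) = 1" unfolding one_sperner_def by blast
  moreover have "a - b = {}" using assms(4) by blast
  ultimately show False by simp
qed

lemma one_sperner_card_Diff_ge_2: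
  assumes "one_sperner E" "a \<in> E" "b \<in> E" "2 \<le> card (a - b)"
  shows "card (b - a) = 1"
proof -
  have "a \<noteq> b" using assms(4) by auto
  with assms have "min (card (a - b)) (card (b - a)) = 1" unfolding one_sperner_def by blast
  with assms(4) show ?thesis by (simp add: min_def split: if_splits)
qed

lemma one_sperner_card_Diff_eq_1:
  assumes "one_sperner E" "a \<in> E" "b \<in> E" "a \<noteq> b" "finite a" "finite b" "card a \<le> card b"
  shows "card (a - b) = 1"
proof -
  have "a - b \<noteq> {}" using one_sperner_antichain[OF assms(1-3)] assms(4) by blast
  then have pos: "1 \<le> card (a - b)" using assms(5) by (simp add: Suc_leI card_gt_0_iff)
  have "\<not> 2 \<le> card (a - b)"
  proof
    assume two: "2 \<le> card (a - b)"
    have "card (b - a) = 1" using one_sperner_card_Diff_ge_2[OF assms(1-3) two] .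
    moreover have "card b = card (b \<inter> a) + card (b - a)" using assms(6) by (rule card_Int_Diff)
    moreover have "card a = card (a \<inter> b) + card (a - b)" using assms(5) by (rule card_Int_Diff)
    ultimately show False using two assms(7) by (simp add: inf_commute)
  qed
  with pos show ?thesis by simp
qed

lemma one_sperner_Diff_singleton_subset:
  assumes "one_sperner E" "a \<in> E" "b \<in> E" "finite a" "finite b" "card a \<le> card b"
    and "z \<in> a" "z \<notin> b"
  shows "a - {z} \<subseteq> b"
proof -
  have "card (a - b) = 1"
    using one_sperner_card_Diff_eq_1[OF assms(1-3) _ assms(4-6)] assms(7,8) by blast
  then have "a - b = {z}" using assms(7,8) by (metis card_1_singletonE singletonD DiffI)
  then show ?thesis by blast
qed

lemma one_sperner_splitting_vertexI:
  assumes sp: "one_sperner E" and fin: "\<forall>f\<in>E. finite f"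
    and e: "e \<in> E" "\<forall>f\<in>E. card e \<le> card f"
    and g0: "g0 \<in> E" "g0 \<noteq> e" "\<forall>f\<in>E - {e}. card f \<le> card g0"
    and z: "z \<in> e" "z \<notin> g0"
  shows "splitting_vertex E z"
  unfolding splitting_vertex_def
proof (intro ballI impI)
  fix g h assume g: "g \<in> E" "z \<in> g" and h: "h \<in> E" "z \<notin> h"
  have e_minus_z: "e - {z} \<subseteq> f" if "f \<in> E" "z \<notin> f" for f
    using fin e that z(1) by (intro one_sperner_Diff_singleton_subset[OF sp e(1) that(1)]) auto
  show "g - {z} \<subseteq> h"
  proof (cases "g = e")
    case True
    then show ?thesis using e_minus_z h by simp
  next
    case False
    have g_in_g0: "g - {z} \<subseteq> g0"
      using fin g g0 z(2) False by (intro one_sperner_Diff_singleton_subset[OF sp g(1) g0(1)]) auto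
    have "card (e - g) = 1"
      using False fin e g by (intro one_sperner_card_Diff_eq_1[OF sp e(1) g(1)]) auto
    then obtain w where w: "e - g = {w}" by (metis card_1_singletonE)
    with g(2) have "w \<noteq> z" by blast
    then have "w \<in> e - {z}" "w \<notin> g" using w by auto
    then have w_in: "w \<in> h" "w \<in> g0" "w \<notin> g" using e_minus_z[OF h] e_minus_z[OF g0(1) z(2)] by auto
    show ?thesis
    proof (rule ccontr)
      assume "\<not> g - {z} \<subseteq> h"
      then obtain x where x: "x \<in> g" "x \<noteq> z" "x \<notin> h" by blast
      have "{z, x} \<subseteq> g - h" using x g h by blast
      then have "2 \<le> card (g - h)" using x(2) fin g(1) by (metis card_2_iff card_mono finite_Diff)
      then have "card (h - g) = 1" using one_sperner_card_Diff_ge_2[OF sp g(1) h(1)] by blast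
      then obtain u where u: "h - g = {u}" by (rule card_1_singletonE)
      moreover have "w \<in> h - g" using w_in by blast
      ultimately have "h - g = {w}" by auto
      then have "h \<subseteq> (g - {z}) \<union> {w}" using h(2) by blast
      then have "h \<subseteq> g0" using g_in_g0 w_in(2) by blast
      then have "h = g0" using one_sperner_antichain[OF sp h(1) g0(1)] by blast
      then show False using x g_in_g0 by blast
    qed
  qed
qed

lemma one_sperner_obtain_splitting_vertex:
  assumes sp: "one_sperner E" and "finite E" "\<forall>f\<in>E. finite f" "2 \<le> card E"
  obtains z where "z \<in> \<Union>E" "splitting_vertex E z"
proof -
  have "E \<noteq> {}" using assms(4) by auto
  then have "Min (card ` E) \<in> card ` E" using assms(2) by simp
  then obtain e where e: "e \<in> E" "card e = Min (card ` E)" by (metis imageE)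
  then have e_min: "\<forall>f\<in>E. card e \<le> card f" using assms(2) by simp
  have "E \<noteq> {e}" using assms(4) by auto
  with e(1) have "E - {e} \<noteq> {}" by blast
  then have "Max (card ` (E - {e})) \<in> card ` (E - {e})" using assms(2) by simp
  then obtain g0 where g0: "g0 \<in> E - {e}" "card g0 = Max (card ` (E - {e}))" by (metis imageE)
  then have g0_max: "\<forall>f\<in>E - {e}. card f \<le> card g0" using assms(2) by simp
  have "\<not> e \<subseteq> g0" using one_sperner_antichain[OF sp e(1)] g0(1) by blast
  then obtain z where z: "z \<in> e" "z \<notin> g0" by blast
  have "splitting_vertex E z"
    using g0 by (intro one_sperner_splitting_vertexI[OF sp assms(3) e(1) e_min _ _ g0_max z]) auto
  moreover have "z \<in> \<Union>E" using z(1) e(1) by blast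
  ultimately show thesis using that by blast
qed

lemma inj_on_Diff_core:
  assumes "\<forall>b\<in>E. S \<subseteq> b"
  shows "inj_on (\<lambda>a. a - S) E"
proof (rule inj_onI)
  fix a b assume "a \<in> E" "b \<in> E" "a - S = b - S"
  then show "a = b" using assms by (metis Diff_partition)
qed

lemma one_sperner_Diff_core:
  assumes "one_sperner E" "\<forall>b\<in>E. S \<subseteq> b"
  shows "one_sperner ((\<lambda>a. a - S) ` E)"
  unfolding one_sperner_def
proof (intro ballI impI)
  fix a' b' assume "a' \<in> (\<lambda>a. a - S) ` E" "b' \<in> (\<lambda>a. a - S) ` E" "a' \<noteq> b'"
  then obtain a b where ab: "a \<in> E" "b \<in> E" "a' = a - S" "b' = b - S" "a \<noteq> b" by blast
  then have "a' - b' = a - b" "b' - a' = b - a" using assms(2) by auto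
  moreover have "min (card (a - b)) (card (b - a)) = 1"
    using assms(1) ab unfolding one_sperner_def by blast
  ultimately show "min (card (a' - b')) (card (b' - a')) = 1" by simp
qed

lemma one_sperner_card_le_max_1:
  assumes "hypergraph V E" "one_sperner E"
  shows "card E \<le> max 1 (card V)"
  using assms
proof (induction "card V" arbitrary: V E rule: less_induct)
  case less
  have V: "finite V" "\<forall>e\<in>E. e \<subseteq> V" using less.prems(1) unfolding hypergraph_def by auto
  note sp = less.prems(2) and E_fin = hypergraph_finite_edges[OF less.prems(1)]
  show ?case
  proof (cases "card E \<le> 1")
    case False
    then have "2 \<le> card E" by simp
    then obtain z where "z \<in> \<Union>E" and split: "splitting_vertex E z"
      by (rule one_sperner_obtain_splitting_vertex[OF sp E_fin])
    then have z: "z \<in> V" using V(2) by blast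
    define Ez where "Ez = {g \<in> E. z \<in> g}"
    define En where "En = {h \<in> E. z \<notin> h}"
    define P where "P = (V - {z}) \<inter> \<Inter>En"
    define Q where "Q = V - {z} - P"
    have "card Ez + card En = card (Ez \<union> En)"
      using E_fin(1) by (intro card_Un_disjoint[symmetric]) (auto simp: Ez_def En_def)
    also have "Ez \<union> En = E" unfolding Ez_def En_def by blast
    finally have card_E: "card E = card Ez + card En" ..
    have card_PQ: "card P + card Q + 1 = card V"
    proof -
      have "P \<subseteq> V - {z}" unfolding P_def by blast
      then have "card P \<le> card (V - {z})" "card Q = card (V - {z}) - card P"
        unfolding Q_def using V(1) by (auto intro: card_mono card_Diff_subset finite_subset)
      moreover have "0 < card V" using z V(1) card_gt_0_iff by blast
      ultimately show ?thesis using z V(1) by (simp add: card_Diff_singleton)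
    qed
    have Ez_core: "\<forall>g\<in>Ez. {z} \<subseteq> g" unfolding Ez_def by blast
    have En_core: "\<forall>h\<in>En. P \<subseteq> h" unfolding P_def by blast
    have card_Ez: "card Ez \<le> max 1 (card P)"
    proof -
      have "card ((\<lambda>g. g - {z}) ` Ez) \<le> max 1 (card P)"
      proof (rule less.hyps)
        show "card P < card V" using card_PQ by linarith
        have "\<forall>g\<in>Ez. g - {z} \<subseteq> P"
          using split V(2) unfolding splitting_vertex_def Ez_def En_def P_def by blast
        then show "hypergraph P ((\<lambda>g. g - {z}) ` Ez)"
          unfolding hypergraph_def P_def using V(1) by auto
        show "one_sperner ((\<lambda>g. g - {z}) ` Ez)"
          using one_sperner_subset[OF sp] Ez_core by (intro one_sperner_Diff_core) (auto simp: Ez_def)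
      qed
      then show ?thesis using card_image[OF inj_on_Diff_core[OF Ez_core]] by simp
    qed
    have card_En: "card En \<le> max 1 (card Q)"
    proof -
      have "card ((\<lambda>h. h - P) ` En) \<le> max 1 (card Q)"
      proof (rule less.hyps)
        show "card Q < card V" using card_PQ by linarith
        show "hypergraph Q ((\<lambda>h. h - P) ` En)"
          unfolding hypergraph_def Q_def En_def using V by auto
        show "one_sperner ((\<lambda>h. h - P) ` En)"
          using one_sperner_subset[OF sp] En_core by (intro one_sperner_Diff_core) (auto simp: En_def)
      qed
      then show ?thesis using card_image[OF inj_on_Diff_core[OF En_core]] by simp
    qed
    show ?thesis
    proof (cases "Ez = {} \<or> En = {}")
      case True
      then have "card E \<le> max (card Ez) (card En)" using card_E by auto
      then show ?thesis using card_Ez card_En card_PQ by (simp add: max_def split: if_splits)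
    next
      case False
      then obtain g h where g: "g \<in> Ez" and h: "h \<in> En" by blast
      then have "h \<noteq> g" unfolding Ez_def En_def by blast
      then have "h \<noteq> {}" using one_sperner_antichain[OF sp] g h unfolding Ez_def En_def by blast
      moreover have "h \<subseteq> V - {z}" using h V(2) unfolding En_def by blast
      ultimately have "card (V - {z}) \<noteq> 0" using V(1) by auto
      then have "1 \<le> card P + card Q" using card_PQ z V(1) by (simp add: card_Diff_singleton)
      then show ?thesis using card_E card_Ez card_En card_PQ by (simp add: max_def split: if_splits)
    qed
  qed simp
qed

theorem corollary16:
  fixes V :: "'a set" and E :: "'a set set"
  assumes "hypergraph V E" and "one_sperner E" and "V \<noteq> {}"
  shows "card E \<le> card V"
proof -
  have "card V \<ge> 1"
    using assms(1,3) unfolding hypergraph_def by (simp add: Suc_leI card_gt_0_iff)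
  then show ?thesis using one_sperner_card_le_max_1[OF assms(1,2)] by simp
qed

end
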